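(* If $X$ is a planar Peano continuum which is not semilocally simply connected at $x\in X$, then for every $\epsilon>0$ there exists a closed disk neighborhood $D$ of $x$ in $\mathbb R^2$ of diameter less than $\epsilon$ whose boundary circle is not contained in $X$.
   Context: A planar Peano continuum is a compact, connected, locally path connected subspace of $\mathbb R^2$. *)

theory Defs
  imports "HOL-Analysis.Analysis"
begin

definition peano_continuum :: "'a::real_normed_vector set \<Rightarrow> bool" where
  "peano_continuum X \<longleftrightarrow> compact X \<and> connected X \<and> locally path_connected X"

definition semilocally_simply_connected_at ::
    "'a::real_normed_vector set \<Rightarrow> 'a \<Rightarrow> bool" where
  "semilocally_simply_connected_at X x \<longleftrightarrow>
     (\<exists>U. openin (top_of_set X) U \<and> x \<in> U \<and>
        (\<forall>p. path p \<and> path_image p \<subseteq> U \<and> pathstart p = x \<and> pathfinish p = x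
              \<longrightarrow> homotopic_loops X p (linepath x x)))"

end

theory Submission
  imports Defs
begin

text \<open>If every small circle around \<open>x\<close> lies in \<open>X\<close>, then a whole round ball around \<open>x\<close>
  lies in \<open>X\<close>; since a ball is convex, every loop in it contracts by the straight-line
  homotopy, so \<open>X\<close> would be semilocally simply connected at \<open>x\<close>. Hence arbitrarily small
  circles centred at \<open>x\<close> itself must leave \<open>X\<close>.\<close>

lemma ball_subset_if_spheres_subset:
  fixes x :: "'a::metric_space"
  assumes "x \<in> X" and "\<And>r. 0 < r \<Longrightarrow> r < e \<Longrightarrow> sphere x r \<subseteq> X"
  shows "ball x e \<subseteq> X"
proof
  fix y assume "y \<in> ball x e"
  then show "y \<in> X"
  proof (cases "y = x")
    case False
    then show ?thesis
      using \<open>y \<in> ball x e\<close> assms(2)[of "dist x y"] by auto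
  qed (use assms(1) in simp)
qed

lemma semilocally_simply_connected_at_if_ball_subset:
  fixes x :: "'a::real_normed_vector"
  assumes "0 < e" and "ball x e \<subseteq> X"
  shows "semilocally_simply_connected_at X x"
  unfolding semilocally_simply_connected_at_def
proof (intro exI conjI allI impI)
  show "openin (top_of_set X) (ball x e)"
    using assms(2) openin_open_Int[OF open_ball, of X x e] by (simp add: Int_absorb1)
  show "x \<in> ball x e"
    using assms(1) by simp
  fix p assume p: "path p \<and> path_image p \<subseteq> ball x e \<and> pathstart p = x \<and> pathfinish p = x"
  show "homotopic_loops X p (linepath x x)"
  proof (rule homotopic_loops_linear)
    show "path p" "path (linepath x x)" "pathfinish p = pathstart p"
      "pathfinish (linepath x x) = pathstart (linepath x x)"
      using p by auto
    fix t :: real assume "t \<in> {0..1}"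
    then have "p t \<in> path_image p"
      by (simp add: path_image_def)
    then have "p t \<in> ball x e"
      using p by blast
    then have "closed_segment (p t) x \<subseteq> ball x e"
      using assms(1) by (simp add: closed_segment_subset convex_ball)
    then show "closed_segment (p t) (linepath x x t) \<subseteq> X"
      using assms(2) by (simp add: linepath_def)
  qed
qed

theorem lemmaA3:
  fixes X :: "(real^2) set" and x :: "real^2" and \<epsilon> :: real
  assumes "peano_continuum X"
    and "x \<in> X"
    and "\<not> semilocally_simply_connected_at X x"
    and "\<epsilon> > 0"
  shows "\<exists>c r. r > 0 \<and> x \<in> ball c r \<and> diameter (cball c r) < \<epsilon> \<and>
               \<not> (sphere c r \<subseteq> X)"
proof (rule ccontr)
  assume "\<not> ?thesis"
  then have "sphere x r \<subseteq> X" if "0 < r" "r < \<epsilon>/2" for r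
    using that by (auto simp: diameter_cball)
  then have "ball x (\<epsilon>/2) \<subseteq> X"
    using assms(2) by (intro ball_subset_if_spheres_subset)
  then have "semilocally_simply_connected_at X x"
    using assms(4) by (intro semilocally_simply_connected_at_if_ball_subset) simp_all
  with assms(3) show False by contradiction
qed

end
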